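(* Let $\mathcal A=\{r_0,\dots,r_m\}\subset\mathbb Z^n$ with $\mathbb Z\mathcal A=\mathbb Z^n$, affine span of dimension $n$, and let $X_{\mathcal A}\subset\mathbb P^m$ be the associated projective toric variety, with $\mathbf 1=(1:\dots:1)\in X_{\mathcal A}$. For $k\ge1$, the projectivization of the row span of the matrix $A^{(k)}$ equals the $k$-th osculating space $\mathbb T^k_{X_{\mathcal A},\mathbf 1}$ of $X_{\mathcal A}$ at $\mathbf 1$. This space depends only on the toric variety $X_{\mathcal A}\subset\mathbb P^m$ and not on the choice of the configuration (and associated matrix) used to rationally parametrize it. Moreover, $X_{\mathcal A}\hookrightarrow\mathbb P^m$ is generically $k$-jet spanned if and only if $A^{(k)}$ has maximal rank $\binom{n+k}{k}$.
   Context: $X_{\mathcal A}$ is the Zariski closure of the image of $(\mathbb C^* )^n\to\mathbb P^m$, $x\mapsto(x^{r_0}:\dots:x^{r_m})$ (not necessarily normal). $A^{(k)}$ is the $\binom{n+k}{k}\times(m+1)$ integer matrix whose rows, indexed by $\beta\in\mathbb N^n$ with $|\beta|\le k$ (in some fixed order), are the vectors $(r_0^\beta,\dots,r_m^\beta)$, where $r_i^\beta=\prod_j (r_i^j)^{\beta_j}$; equivalently the rows are the coordinatewise products of at most $k$ rows of the matrix $A$ with columns $(1,r_i)$, with the all-ones row $\mathbf v_0$ (e.g. for $k=2$: $\mathbf v_0,\dots,\mathbf v_n$ and $\mathbf v_i*\mathbf v_j$, $1\le i\le j\le n$). For an embedded variety with $\mathcal L=\mathcal O_X(1)$, the $k$-th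 osculating space at a smooth point $x$ is $\mathbb T^k_{X,x}=\mathbb P(\operatorname{Im}j_{k,x})$, where $j_{k,x}\colon H^0(\mathbb P^m,\mathcal O(1))\to\mathcal L/\mathfrak m_x^{k+1}\mathcal L$ is the Taylor expansion to order $k$; the embedding is generically $k$-jet spanned if $j_{k,x}$ is surjective (rank $\binom{n+k}{n}$) at a general point. *)

theory Defs
  imports "HOL-Analysis.Analysis"
begin

text \<open>Coordinates of the ambient space C^(m+1) are indexed by a finite type 'm
  (one index per point r_i of the configuration); the torus variables are
  indexed by a finite type 'n, so n = CARD('n).  We work on the affine cone
  in C^(m+1) over the projective variety in P^m.\<close>

inductive poly_fun :: "(complex^'m \<Rightarrow> complex) \<Rightarrow> bool" where
  pf_const: "poly_fun (\<lambda>z. c)"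
| pf_coord: "poly_fun (\<lambda>z. z $ i)"
| pf_add: "poly_fun f \<Longrightarrow> poly_fun g \<Longrightarrow> poly_fun (\<lambda>z. f z + g z)"
| pf_mult: "poly_fun f \<Longrightarrow> poly_fun g \<Longrightarrow> poly_fun (\<lambda>z. f z * g z)"

definition zariski_closure :: "(complex^'m) set \<Rightarrow> (complex^'m) set" where
  "zariski_closure S =
     {z. \<forall>f. poly_fun f \<longrightarrow> (\<forall>s\<in>S. f s = 0) \<longrightarrow> f z = 0}"

text \<open>Affine cone over the projective toric variety X_A: Zariski closure of
  the cone over the image of the monomial map x \<mapsto> (x^r_0 : ... : x^r_m).\<close>
definition toric_cone :: "('m \<Rightarrow> int^'n) \<Rightarrow> (complex^'m) set" where
  "toric_cone r = zariski_closure
     {(\<chi> i. t * (\<Prod>j\<in>UNIV. (x $ j) powi (r i $ j))) | t x.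
        t \<noteq> 0 \<and> (\<forall>j. x $ j \<noteq> 0)}"

definition lin_form :: "complex^'m \<Rightarrow> complex^'m \<Rightarrow> complex" where
  "lin_form c z = (\<Sum>i\<in>UNIV. c $ i * z $ i)"

text \<open>Kernel of the k-jet map j_(k,p): linear forms whose restriction to the
  (cone over the) variety X lies in m_p^(k+1), i.e. vanishes to order k+1 at p.\<close>
definition jet_kernel :: "(complex^'m) set \<Rightarrow> nat \<Rightarrow> complex^'m \<Rightarrow> (complex^'m) set" where
  "jet_kernel X k p = {c. \<exists>C \<delta>. \<delta> > 0 \<and>
      (\<forall>z\<in>X. norm (z - p) < \<delta> \<longrightarrow> cmod (lin_form c z) \<le> C * norm (z - p) ^ (k + 1))}"

text \<open>Rank of j_(k,p) = dim H^0(O(1)) - dim ker j_(k,p).\<close>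
definition jet_rank :: "(complex^'m) set \<Rightarrow> nat \<Rightarrow> complex^'m \<Rightarrow> nat" where
  "jet_rank X k p = CARD('m) - vec.dim (jet_kernel X k p)"

text \<open>k-th osculating space P(Im j_(k,p)), as the linear subspace of C^(m+1)
  (affine cone over the projective subspace of P^m) annihilated by ker j_(k,p).\<close>
definition osculating_space :: "(complex^'m) set \<Rightarrow> nat \<Rightarrow> complex^'m \<Rightarrow> (complex^'m) set" where
  "osculating_space X k p = {v. \<forall>c\<in>jet_kernel X k p. lin_form c v = 0}"

text \<open>Generically k-jet spanned (X of dimension n): j_(k,p) has rank
  binom(n+k, n) for all p in a nonempty Zariski open subset of X.\<close>
definition generically_jet_spanned :: "(complex^'m) set \<Rightarrow> nat \<Rightarrow> nat \<Rightarrow> bool" where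
  "generically_jet_spanned X n k \<longleftrightarrow>
     (\<exists>f. poly_fun f \<and> (\<exists>p\<in>X. f p \<noteq> 0) \<and>
        (\<forall>p\<in>X. p \<noteq> 0 \<and> f p \<noteq> 0 \<longrightarrow> jet_rank X k p = (n + k) choose n))"

definition Ak_rows :: "('m \<Rightarrow> int^'n) \<Rightarrow> nat \<Rightarrow> (complex^'m) set" where
  "Ak_rows r k = {(\<chi> i. of_int (\<Prod>j\<in>UNIV. (r i $ j) ^ (\<beta> $ j))) | \<beta>::nat^'n.
                     (\<Sum>j\<in>UNIV. \<beta> $ j) \<le> k}"

definition good_config :: "('m \<Rightarrow> int^'n) \<Rightarrow> bool" where
  "good_config r \<longleftrightarrow> inj r
     \<and> (\<forall>v::int^'n. \<exists>a::'m \<Rightarrow> int. v = (\<Sum>i\<in>UNIV. a i *s r i))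
     \<and> aff_dim (range (\<lambda>i. (\<chi> j. real_of_int (r i $ j)) :: real^'n)) = int CARD('n)"

end

theory Submission
  imports Defs
begin

text \<open>At every point \<open>q\<close> of the dense torus (in particular at \<open>\<one> = (1 : \<dots> : 1)\<close>) the
  kernel of the \<open>k\<close>-jet map of the toric cone consists of the linear forms \<open>c\<close> such that
  \<open>c q\<close> (coordinatewise product) annihilates the rows of \<open>A\<^sup>(\<^sup>k\<^sup>)\<close>.
  By polarization, the rows of \<open>A\<^sup>(\<^sup>k\<^sup>)\<close> span the same space as the \<open>e\<close>-th powers,
  \<open>e \<le> k\<close>, of the vectors \<open>w\<close> of values of affine functions on the configuration.
  If \<open>c\<close> is in the jet kernel, restricting it to the torus curves \<open>\<tau> \<mapsto> q exp(\<tau> w)\<close>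
  shows that \<open>\<Sum>\<^sub>i c\<^sub>i q\<^sub>i exp(\<tau> w\<^sub>i)\<close> vanishes to order \<open>k + 1\<close>, so its Taylor
  coefficients \<open>\<Sum>\<^sub>i c\<^sub>i q\<^sub>i w\<^sub>i\<^sup>e\<close> vanish. Conversely, a point \<open>z\<close> of the cone near \<open>q\<close>
  is \<open>q exp(w)\<close> for a small affine-values vector \<open>w\<close>: taking logarithms turns the
  binomial equations of the cone into the linear relations of the configuration, which
  cut out exactly the affine-values vectors. Taylor expansion of the exponential then
  bounds \<open>c(z)\<close> by \<open>|z - q|\<^sup>k\<^sup>+\<^sup>1\<close>. Hence the jet map has rank \<open>rank A\<^sup>(\<^sup>k\<^sup>)\<close> at
  every torus point, which gives all three claims.\<close>

section \<open>Linear forms and annihilators\<close>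

definition annihilator :: "(complex^'m) set \<Rightarrow> (complex^'m::finite) set" where
  "annihilator S = {c. \<forall>v\<in>S. lin_form c v = 0}"

lemma sum_axis_mult: "(\<Sum>l\<in>UNIV. axis j 1 $ l * f l) = (f j :: 'a::comm_ring_1)"
proof -
  have "(\<Sum>l\<in>UNIV. axis j 1 $ l * f l) = (\<Sum>l\<in>UNIV. if l = j then f l else 0)"
    by (rule sum.cong) (auto simp: axis_def)
  then show ?thesis
    by simp
qed

lemma sum_mult_axis: "(\<Sum>l\<in>UNIV. f l * axis j 1 $ l) = (f j :: 'a::comm_ring_1)"
  using sum_axis_mult[of j f] by (simp add: mult.commute)

lemma sum_axis_scale: "(\<Sum>l\<in>UNIV. axis j 1 $ l *s f l) = (f j :: 'a::comm_ring_1^'n::finite)"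
  by (simp add: vec_eq_iff sum_axis_mult)

lemma lin_form_zero_left [simp]: "lin_form 0 z = 0"
  by (simp add: lin_form_def)

lemma lin_form_zero_right [simp]: "lin_form c 0 = 0"
  by (simp add: lin_form_def)

lemma lin_form_add_left: "lin_form (u + v) z = lin_form u z + lin_form v z"
  by (simp add: lin_form_def algebra_simps sum.distrib)

lemma lin_form_scale_left: "lin_form (a *s u) z = a * lin_form u z"
  by (simp add: lin_form_def algebra_simps sum_distrib_left)

lemma lin_form_diff_left: "lin_form (u - v) z = lin_form u z - lin_form v z"
  by (simp add: lin_form_def algebra_simps sum_subtractf)

lemma lin_form_sum_left: "lin_form (\<Sum>j\<in>A. f j) v = (\<Sum>j\<in>A. lin_form (f j) v)"
  by (simp add: lin_form_def sum_distrib_right sum.swap[of _ UNIV])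

lemma lin_form_axis_left: "lin_form (axis i 1) v = v $ i"
  by (simp add: lin_form_def sum_axis_mult)

lemma lin_form_add_right: "lin_form c (u + v) = lin_form c u + lin_form c v"
  by (simp add: lin_form_def algebra_simps sum.distrib)

lemma lin_form_scale_right: "lin_form c (a *s v) = a * lin_form c v"
  by (simp add: lin_form_def algebra_simps sum_distrib_left)

lemma lin_form_sum_right: "lin_form c (\<Sum>j\<in>A. f j) = (\<Sum>j\<in>A. lin_form c (f j))"
  by (simp add: lin_form_def sum_distrib_left sum.swap[of _ UNIV])

lemma subspace_annihilator: "vec.subspace (annihilator S)"
  by (auto simp: vec.subspace_def annihilator_def lin_form_add_left lin_form_scale_left)

lemma annihilator_vanishes_on_span:
  assumes "c \<in> annihilator S" and "v \<in> vec.span S"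
  shows "lin_form c v = 0"
proof -
  have "vec.subspace {v. lin_form c v = 0}"
    by (auto simp: vec.subspace_def lin_form_add_right lin_form_scale_right)
  moreover have "S \<subseteq> {v. lin_form c v = 0}"
    using assms(1) by (auto simp: annihilator_def)
  ultimately show ?thesis
    using assms(2) vec.span_minimal by blast
qed

lemma annihilator_span [simp]: "annihilator (vec.span S) = annihilator S"
  using annihilator_vanishes_on_span by (auto simp: annihilator_def vec.span_base)

lemma subspace_vec_span_real: "subspace (vec.span (S :: (complex^'m::finite) set))"
proof -
  have "r *\<^sub>R v = (of_real r :: complex) *s v" for r and v :: "complex^'m"
    by (simp add: vec_eq_iff of_real_def del: scaleR_conv_of_real)
  then show ?thesis
    by (auto simp: subspace_def vec.span_zero vec.span_add vec.span_scale)
qed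

text \<open>The pairing is bilinear, not Hermitian; a separating form is obtained from the
  real orthogonal projection onto the span by conjugating the orthogonal component.\<close>
lemma annihilator_separates:
  fixes S :: "(complex^'m::finite) set"
  assumes "v \<notin> vec.span S"
  obtains c where "c \<in> annihilator S" and "lin_form c v \<noteq> 0"
proof -
  let ?U = "vec.span S"
  have "span ?U = ?U"
    using subspace_vec_span_real span_eq_iff by blast
  then obtain y u where y: "y \<in> ?U" and u: "\<And>w. w \<in> ?U \<Longrightarrow> orthogonal u w" and v: "v = y + u"
    using orthogonal_subspace_decomp_exists[of ?U v] by metis
  define c where "c = (\<chi> i. cnj (u $ i))"
  have Re_c: "Re (lin_form c w) = inner u w" for w
    by (simp add: lin_form_def c_def inner_vec_def inner_complex_def Re_sum algebra_simps)
  have Im_c: "Im (lin_form c w) = - inner u (\<i> *s w)" for w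
    by (simp add: lin_form_def c_def inner_vec_def inner_complex_def Im_sum algebra_simps
        sum_negf[symmetric])
  have c_U: "lin_form c w = 0" if "w \<in> ?U" for w
  proof -
    have "\<i> *s w \<in> ?U"
      using that vec.span_scale by blast
    then show ?thesis
      using u that by (simp add: complex_eq_iff Re_c Im_c orthogonal_def)
  qed
  have "u \<noteq> 0"
    using assms y v by auto
  then have "lin_form c u \<noteq> 0"
    using Re_c[of u] by (metis inner_gt_zero_iff less_irrefl zero_complex.simps(1))
  moreover have "lin_form c v = lin_form c u"
    using c_U[OF y] by (simp add: v lin_form_add_right)
  moreover have "c \<in> annihilator S"
    using c_U by (auto simp: annihilator_def vec.span_base)
  ultimately show ?thesis
    using that by simp
qed

lemma annihilator_annihilator: "{v. \<forall>c\<in>annihilator S. lin_form c v = 0} = vec.span S"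
  using annihilator_separates annihilator_vanishes_on_span by blast

lemma dim_annihilator_independent:
  fixes B :: "(complex^'m::finite) set"
  assumes "finite B" and "vec.independent B"
  shows "vec.dim (annihilator B) + card B = CARD('m)"
  using assms
proof (induction B rule: finite_induct)
  case empty
  have "annihilator ({} :: (complex^'m) set) = UNIV"
    by (auto simp: annihilator_def)
  then show ?case
    by (simp add: card_cart_basis)
next
  case (insert b B)
  have "vec.independent B" and b: "b \<notin> vec.span B"
    using insert.prems insert.hyps(2) vec.independent_insert[of b B] by simp_all
  then have IH: "vec.dim (annihilator B) + card B = CARD('m)"
    using insert.IH by blast
  obtain c0 where c0: "c0 \<in> annihilator B" "lin_form c0 b \<noteq> 0"
    using annihilator_separates[OF b] by blast
  let ?P = "annihilator (insert b B)"
  have P: "?P = annihilator B \<inter> {c. lin_form c b = 0}"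
    by (auto simp: annihilator_def)
  have "c0 \<notin> vec.span ?P"
    using c0(2) subspace_annihilator vec.span_eq_iff by (metis Int_iff P mem_Collect_eq)
  then have dim_insert: "vec.dim (insert c0 ?P) = vec.dim ?P + 1"
    by (simp add: vec.dim_insert)
  have "vec.span (insert c0 ?P) = annihilator B"
  proof (rule vec.span_subspace)
    show "insert c0 ?P \<subseteq> annihilator B"
      using c0 P by auto
    show "annihilator B \<subseteq> vec.span (insert c0 ?P)"
    proof
      fix c assume c: "c \<in> annihilator B"
      define \<alpha> where "\<alpha> = lin_form c b / lin_form c0 b"
      have "c - \<alpha> *s c0 \<in> annihilator B"
        using c c0(1) subspace_annihilator vec.subspace_diff vec.subspace_scale by blast
      moreover have "lin_form (c - \<alpha> *s c0) b = 0"
        using c0(2) by (simp add: \<alpha>_def lin_form_diff_left lin_form_scale_left)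
      ultimately have "c - \<alpha> *s c0 \<in> vec.span (insert c0 ?P)"
        using P by (simp add: vec.span_base)
      then have "(c - \<alpha> *s c0) + \<alpha> *s c0 \<in> vec.span (insert c0 ?P)"
        by (meson insertI1 vec.span_add vec.span_base vec.span_scale)
      then show "c \<in> vec.span (insert c0 ?P)"
        by simp
    qed
  qed (rule subspace_annihilator)
  then have "vec.dim (annihilator B) = vec.dim ?P + 1"
    using dim_insert vec.dim_span[of "insert c0 ?P"] by simp
  then show ?case
    using IH insert.hyps by simp
qed

lemma dim_annihilator:
  fixes S :: "(complex^'m::finite) set"
  shows "vec.dim (annihilator S) + vec.dim S = CARD('m)"
proof -
  obtain B where B: "B \<subseteq> S" "vec.independent B" "S \<subseteq> vec.span B" "card B = vec.dim S"
    using vec.basis_exists by blast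
  have "vec.span B = vec.span S"
    using B(1,3) vec.span_mono vec.span_span vec.span_subspace vec.subspace_span by metis
  then have "annihilator B = annihilator S"
    by (metis annihilator_span)
  moreover have "finite B"
    using B(2) vec.finiteI_independent by blast
  ultimately show ?thesis
    using dim_annihilator_independent[of B] B by simp
qed

section \<open>Rows of \<open>A\<^sup>(\<^sup>k\<^sup>)\<close> and powers of affine functions\<close>

definition affine_values :: "('m::finite \<Rightarrow> int^'n::finite) \<Rightarrow> complex \<Rightarrow> complex^'n \<Rightarrow> complex^'m" where
  "affine_values r y0 y = (\<chi> i. y0 + (\<Sum>j\<in>UNIV. y $ j * of_int (r i $ j)))"

definition config_monomial :: "('m::finite \<Rightarrow> int^'n::finite) \<Rightarrow> nat^'n \<Rightarrow> complex^'m" where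
  "config_monomial r \<beta> = (\<chi> i. of_int (\<Prod>j\<in>UNIV. (r i $ j) ^ (\<beta> $ j)))"

lemma Ak_rows_config_monomial: "Ak_rows r k = {config_monomial r \<beta> | \<beta>. (\<Sum>j\<in>UNIV. \<beta> $ j) \<le> k}"
  by (simp add: Ak_rows_def config_monomial_def)

lemma vec_power_nth [simp]: "(x ^ e) $ i = (x $ i) ^ e"
  for x :: "'a::comm_ring_1^'m::finite"
  by (induction e) simp_all

lemma affine_values_axis: "affine_values r 0 (axis j 1) $ i = of_int (r i $ j)"
  by (simp add: affine_values_def sum_axis_mult)

lemma affine_values_add:
  "affine_values r y0 y + t *s affine_values r z0 z = affine_values r (y0 + t * z0) (y + t *s z)"
  by (simp add: affine_values_def vec_eq_iff algebra_simps sum.distrib sum_distrib_left)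

lemma config_monomial_0 [simp]: "config_monomial r 0 = 1"
  by (simp add: config_monomial_def vec_eq_iff)

lemma config_monomial_add_axis:
  "config_monomial r (\<beta> + axis j 1) = config_monomial r \<beta> * affine_values r 0 (axis j 1)"
proof -
  have "(\<Prod>l\<in>UNIV. (r i $ l) ^ ((\<beta> + axis j 1) $ l)) =
        (\<Prod>l\<in>UNIV. (r i $ l) ^ (\<beta> $ l) * (if l = j then r i $ l else 1))" for i
    by (rule prod.cong) (auto simp: axis_def)
  then show ?thesis
    by (simp add: vec_eq_iff config_monomial_def affine_values_axis prod.distrib)
qed

lemma config_monomial_mult_affine_values:
  "config_monomial r \<beta> * affine_values r y0 y =
     y0 *s config_monomial r \<beta> + (\<Sum>j\<in>UNIV. y $ j *s config_monomial r (\<beta> + axis j 1))"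
  by (simp add: vec_eq_iff config_monomial_add_axis[unfolded One_nat_def] affine_values_axis
      sum_distrib_left algebra_simps) (simp add: affine_values_def sum_distrib_left algebra_simps)

lemma lin_form_config_monomial_affine_powers:
  assumes c: "c \<in> annihilator (Ak_rows r k)"
  shows "(\<Sum>j\<in>UNIV. \<beta> $ j) + e \<le> k \<Longrightarrow>
    lin_form c (config_monomial r \<beta> * affine_values r y0 y ^ e) = 0"
proof (induction e arbitrary: \<beta>)
  case 0
  then have "config_monomial r \<beta> \<in> Ak_rows r k"
    by (auto simp: Ak_rows_config_monomial)
  then show ?case
    using c by (simp add: annihilator_def)
next
  case (Suc e)
  let ?a = "affine_values r y0 y" and ?M = "config_monomial r"
  have "(\<Sum>l\<in>UNIV. (\<beta> + axis j 1) $ l) + e \<le> k" for j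
    using Suc.prems by (simp add: sum.distrib axis_def)
  then have "lin_form c (?M (\<beta> + axis j 1) * ?a ^ e) = 0" for j
    using Suc.IH by blast
  moreover have "?M \<beta> * ?a ^ Suc e =
      y0 *s (?M \<beta> * ?a ^ e) + (\<Sum>j\<in>UNIV. y $ j *s (?M (\<beta> + axis j 1) * ?a ^ e))"
  proof -
    have "?M \<beta> * ?a ^ Suc e = (?M \<beta> * ?a) * ?a ^ e"
      by (simp add: mult.assoc)
    then show ?thesis
      by (simp add: config_monomial_mult_affine_values vec_eq_iff sum_distrib_left algebra_simps)
  qed
  ultimately show ?case
    using Suc by (simp add: lin_form_add_right lin_form_scale_right lin_form_sum_right)
qed

lemma coeff_linear_power: "coeff ([:a, b:] ^ Suc e) 1 = of_nat (Suc e) * a ^ e * (b::complex)"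
proof -
  have "coeff ([:a, b:] ^ Suc e) 1 = coeff (pderiv ([:a, b:] ^ Suc e)) 0"
    by (simp add: coeff_pderiv)
  also have "pderiv ([:a, b:] ^ Suc e) = smult (of_nat (Suc e)) ([:a, b:] ^ e) * [:b:]"
    by (simp only: pderiv_power_Suc) (simp add: pderiv_pCons)
  finally show ?thesis
    by (simp add: coeff_0_power)
qed

text \<open>Polarization: differentiating \<open>(a + t x)^(e+1)\<close> in \<open>t\<close> trades one power of an
  affine-values vector \<open>a\<close> for an arbitrary affine-values factor \<open>x\<close>.\<close>
lemma lin_form_affine_powers_mult_prod_list:
  assumes powers: "\<And>y0 y e. e \<le> k \<Longrightarrow> lin_form c (affine_values r y0 y ^ e) = 0"
  shows "set xs \<subseteq> range (case_prod (affine_values r)) \<Longrightarrow> e + length xs \<le> k \<Longrightarrow>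
    lin_form c (affine_values r y0 y ^ e * prod_list xs) = 0"
proof (induction xs arbitrary: y0 y e)
  case Nil
  then show ?case
    using powers by simp
next
  case (Cons x xs)
  obtain z0 z where x: "x = affine_values r z0 z"
    using Cons.prems by auto
  let ?a = "affine_values r y0 y" and ?P = "prod_list xs"
  define Q where "Q = (\<Sum>i\<in>UNIV. smult (c $ i * ?P $ i) ([:?a $ i, x $ i:] ^ Suc e))"
  have "poly Q t = lin_form c ((?a + t *s x) ^ Suc e * ?P)" for t
    by (simp add: Q_def poly_sum poly_power lin_form_def mult_ac del: power_Suc)
  also have "\<dots> t = 0" for t
    using Cons.IH[of "Suc e"] Cons.prems by (simp add: x affine_values_add del: power_Suc)
  finally have "Q = 0"
    using poly_all_0_iff_0 by blast
  then have "coeff Q 1 = 0"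
    by simp
  then have "(\<Sum>i\<in>UNIV. c $ i * ?P $ i * (of_nat (Suc e) * ?a $ i ^ e * x $ i)) = 0"
    by (simp only: Q_def coeff_sum coeff_smult coeff_linear_power mult.assoc)
  then have "of_nat (Suc e) * lin_form c (?a ^ e * (x * ?P)) = 0"
    by (simp add: lin_form_def sum_distrib_left mult_ac del: of_nat_Suc power_Suc)
  then show ?case
    by (simp del: of_nat_Suc)
qed

lemma config_monomial_prod_list:
  "(\<Sum>j\<in>UNIV. \<beta> $ j) = N \<Longrightarrow> \<exists>xs. set xs \<subseteq> range (case_prod (affine_values r)) \<and>
    length xs = N \<and> config_monomial r \<beta> = prod_list xs"
proof (induction N arbitrary: \<beta>)
  case 0
  then have "\<beta> = 0"
    by (simp add: vec_eq_iff)
  then show ?case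
    by simp
next
  case (Suc N)
  obtain j where j: "\<beta> $ j \<noteq> 0"
    using Suc.prems by (metis nat.distinct(1) sum.neutral)
  define \<beta>' where "\<beta>' = (\<chi> l. if l = j then \<beta> $ l - 1 else \<beta> $ l)"
  have \<beta>: "\<beta> = \<beta>' + axis j 1"
    using j by (auto simp: vec_eq_iff \<beta>'_def axis_def)
  then have "(\<Sum>l\<in>UNIV. \<beta>' $ l) = N"
    using Suc.prems by (simp add: sum.distrib axis_def)
  then obtain xs where "set xs \<subseteq> range (case_prod (affine_values r))" "length xs = N"
    "config_monomial r \<beta>' = prod_list xs"
    using Suc.IH by blast
  then show ?case
    by (intro exI[of _ "affine_values r 0 (axis j 1) # xs"])
      (auto simp: \<beta> config_monomial_add_axis[unfolded One_nat_def] mult.commute)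
qed

lemma annihilator_Ak_rows_iff:
  "c \<in> annihilator (Ak_rows r k) \<longleftrightarrow>
    (\<forall>y0 y e. e \<le> k \<longrightarrow> lin_form c (affine_values r y0 y ^ e) = 0)"
proof
  assume "c \<in> annihilator (Ak_rows r k)"
  then show "\<forall>y0 y e. e \<le> k \<longrightarrow> lin_form c (affine_values r y0 y ^ e) = 0"
    using lin_form_config_monomial_affine_powers[of c r k 0] by simp
next
  assume "\<forall>y0 y e. e \<le> k \<longrightarrow> lin_form c (affine_values r y0 y ^ e) = 0"
  then have "lin_form c (config_monomial r \<beta>) = 0" if "(\<Sum>j\<in>UNIV. \<beta> $ j) \<le> k" for \<beta>
    using lin_form_affine_powers_mult_prod_list[of k c r _ 0 0 0] config_monomial_prod_list[of \<beta>] that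
    by fastforce
  then show "c \<in> annihilator (Ak_rows r k)"
    by (auto simp: annihilator_def Ak_rows_config_monomial)
qed

section \<open>Vanishing to order \<open>k + 1\<close>\<close>

lemma norm_exp_taylor_remainder_le:
  fixes z :: complex
  assumes "norm z \<le> 1"
  shows "norm (exp z - (\<Sum>d\<le>k. z ^ d / fact d)) \<le> exp 1 * norm z ^ Suc k"
proof -
  have "norm (exp z - (\<Sum>d\<le>k. z ^ d / fact d)) \<le> exp (norm z) * norm z ^ Suc k / fact k"
    by (rule Taylor_exp_field)
  also have "\<dots> \<le> exp (norm z) * norm z ^ Suc k"
    using divide_left_mono[of 1 "fact k" "exp (norm z) * norm z ^ Suc k"] fact_ge_1[of k] by simp
  also have "\<dots> \<le> exp 1 * norm z ^ Suc k"
    using assms by (intro mult_right_mono) auto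
  finally show ?thesis .
qed

lemma norm_exp_sum_taylor_remainder_le:
  fixes c v :: "'m::finite \<Rightarrow> complex"
  assumes "\<And>i. norm (v i) \<le> s" and "s \<le> 1"
  shows "norm ((\<Sum>i\<in>UNIV. c i * exp (v i)) - (\<Sum>d\<le>k. (\<Sum>i\<in>UNIV. c i * v i ^ d) / fact d))
    \<le> (\<Sum>i\<in>UNIV. norm (c i)) * exp 1 * s ^ Suc k"
proof -
  have "(\<Sum>d\<le>k. (\<Sum>i\<in>UNIV. c i * v i ^ d) / fact d) = (\<Sum>i\<in>UNIV. c i * (\<Sum>d\<le>k. v i ^ d / fact d))"
    by (simp add: sum_divide_distrib sum_distrib_left sum.swap[of _ "{..k}"])
  then have "norm ((\<Sum>i\<in>UNIV. c i * exp (v i)) - (\<Sum>d\<le>k. (\<Sum>i\<in>UNIV. c i * v i ^ d) / fact d))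
      = norm (\<Sum>i\<in>UNIV. c i * (exp (v i) - (\<Sum>d\<le>k. v i ^ d / fact d)))"
    by (simp add: right_diff_distrib sum_subtractf)
  also have "\<dots> \<le> (\<Sum>i\<in>UNIV. norm (c i) * (exp 1 * s ^ Suc k))"
  proof (rule order_trans[OF norm_sum sum_mono])
    fix i
    have "norm (v i) \<le> 1"
      using assms order_trans by blast
    then have "norm (exp (v i) - (\<Sum>d\<le>k. v i ^ d / fact d)) \<le> exp 1 * norm (v i) ^ Suc k"
      by (rule norm_exp_taylor_remainder_le)
    also have "\<dots> \<le> exp 1 * s ^ Suc k"
      using assms(1) by (intro mult_left_mono power_mono) auto
    finally show "norm (c i * (exp (v i) - (\<Sum>d\<le>k. v i ^ d / fact d))) \<le> norm (c i) * (exp 1 * s ^ Suc k)"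
      by (simp add: norm_mult mult_left_mono)
  qed
  also have "\<dots> = (\<Sum>i\<in>UNIV. norm (c i)) * exp 1 * s ^ Suc k"
    unfolding sum_distrib_right[symmetric] by (simp add: mult.assoc)
  finally show ?thesis .
qed

lemma constant_coeff_eq_0_if_small:
  fixes a :: "nat \<Rightarrow> complex"
  assumes "\<eta> > 0"
    and "\<And>\<tau>. \<tau> \<noteq> 0 \<Longrightarrow> norm \<tau> < \<eta> \<Longrightarrow> norm (\<Sum>d\<le>k. a d * \<tau> ^ d) \<le> C * norm \<tau> ^ Suc k"
  shows "a 0 = 0"
proof -
  have "((\<lambda>\<tau>. norm (\<Sum>d\<le>k. a d * \<tau> ^ d)) \<longlongrightarrow> norm (\<Sum>d\<le>k. a d * 0 ^ d)) (at 0)"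
    by (intro tendsto_intros)
  moreover have "((\<lambda>\<tau>::complex. C * norm \<tau> ^ Suc k) \<longlongrightarrow> C * norm (0::complex) ^ Suc k) (at 0)"
    by (intro tendsto_intros)
  moreover have "eventually (\<lambda>\<tau>. norm (\<Sum>d\<le>k. a d * \<tau> ^ d) \<le> C * norm \<tau> ^ Suc k) (at 0)"
    using assms by (auto simp: eventually_at dist_norm)
  ultimately have "norm (\<Sum>d\<le>k. a d * 0 ^ d) \<le> 0"
    using tendsto_le[OF trivial_limit_at] by fastforce
  moreover have "(\<Sum>d\<le>k. a d * 0 ^ d) = (\<Sum>d\<le>k. if d = 0 then a d else 0)"
    by (rule sum.cong) (auto simp: power_0_left)
  moreover have "\<dots> = a 0"
    by (simp add: sum.delta)
  ultimately show ?thesis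
    by simp
qed

lemma poly_coeffs_eq_0_if_small:
  fixes a :: "nat \<Rightarrow> complex"
  assumes "\<eta> > 0"
    and "\<And>\<tau>. \<tau> \<noteq> 0 \<Longrightarrow> norm \<tau> < \<eta> \<Longrightarrow> norm (\<Sum>d\<le>k. a d * \<tau> ^ d) \<le> C * norm \<tau> ^ Suc k"
  shows "d \<le> k \<Longrightarrow> a d = 0"
  using assms(2)
proof (induction k arbitrary: a d)
  case 0
  then show ?case
    using constant_coeff_eq_0_if_small[OF assms(1)] by blast
next
  case (Suc k)
  have a0: "a 0 = 0"
    using constant_coeff_eq_0_if_small[OF assms(1) Suc.prems(2)] .
  have "a (Suc d') = 0" if "d' \<le> k" for d'
  proof (rule Suc.IH[OF that])
    fix \<tau> :: complex assume \<tau>: "\<tau> \<noteq> 0" "norm \<tau> < \<eta>"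
    have "(\<Sum>d\<le>Suc k. a d * \<tau> ^ d) = \<tau> * (\<Sum>d\<le>k. a (Suc d) * \<tau> ^ d)"
      by (subst sum.atMost_Suc_shift) (simp add: a0 sum_distrib_left algebra_simps)
    then have "norm \<tau> * norm (\<Sum>d\<le>k. a (Suc d) * \<tau> ^ d) \<le> norm \<tau> * (C * norm \<tau> ^ Suc k)"
      using Suc.prems(2)[OF \<tau>] by (simp add: norm_mult algebra_simps)
    then show "norm (\<Sum>d\<le>k. a (Suc d) * \<tau> ^ d) \<le> C * norm \<tau> ^ Suc k"
      using \<tau> by simp
  qed
  then show ?case
    using a0 Suc.prems(1) by (cases d) auto
qed

lemma power_sums_eq_0_if_exp_sum_small:
  fixes c w :: "'m::finite \<Rightarrow> complex"
  assumes "\<eta> > 0"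
    and "\<And>\<tau>. \<tau> \<noteq> 0 \<Longrightarrow> norm \<tau> < \<eta> \<Longrightarrow> norm (\<Sum>i\<in>UNIV. c i * exp (\<tau> * w i)) \<le> C * norm \<tau> ^ Suc k"
    and "e \<le> k"
  shows "(\<Sum>i\<in>UNIV. c i * w i ^ e) = 0"
proof -
  define W where "W = 1 + (\<Sum>i\<in>UNIV. norm (w i))"
  have "norm (w i) \<le> (\<Sum>i\<in>UNIV. norm (w i))" for i
    by (rule member_le_sum) auto
  then have W: "W \<ge> 1" "\<And>i. norm (w i) \<le> W"
    by (simp_all add: W_def sum_nonneg add_increasing)
  define K where "K = (\<Sum>i\<in>UNIV. norm (c i)) * exp 1 * W ^ Suc k"
  define a where "a d = (\<Sum>i\<in>UNIV. c i * w i ^ d) / fact d" for d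
  have "a e = 0"
  proof (rule poly_coeffs_eq_0_if_small[OF _ _ assms(3)])
    show "min \<eta> (1/W) > 0"
      using assms(1) W by simp
    fix \<tau> :: complex assume \<tau>: "\<tau> \<noteq> 0" "norm \<tau> < min \<eta> (1/W)"
    have tw: "norm (\<tau> * w i) \<le> W * norm \<tau>" for i
      using W(2)[of i] by (metis mult.commute mult_left_mono norm_ge_zero norm_mult)
    have "W * norm \<tau> \<le> 1"
      using \<tau> W by (simp add: field_simps)
    then have "norm ((\<Sum>i\<in>UNIV. c i * exp (\<tau> * w i)) - (\<Sum>d\<le>k. (\<Sum>i\<in>UNIV. c i * (\<tau> * w i) ^ d) / fact d))
        \<le> K * norm \<tau> ^ Suc k"
      using norm_exp_sum_taylor_remainder_le[of "\<lambda>i. \<tau> * w i", OF tw] by (simp add: K_def power_mult_distrib mult_ac)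
    moreover have "(\<Sum>d\<le>k. (\<Sum>i\<in>UNIV. c i * (\<tau> * w i) ^ d) / fact d) = (\<Sum>d\<le>k. a d * \<tau> ^ d)"
      by (simp add: a_def power_mult_distrib sum_divide_distrib sum_distrib_left mult_ac)
    moreover have "norm (\<Sum>i\<in>UNIV. c i * exp (\<tau> * w i)) \<le> C * norm \<tau> ^ Suc k"
      using assms(2) \<tau> by simp
    ultimately show "norm (\<Sum>d\<le>k. a d * \<tau> ^ d) \<le> (C + K) * norm \<tau> ^ Suc k"
      using norm_triangle_ineq3[of "\<Sum>d\<le>k. a d * \<tau> ^ d" "\<Sum>i\<in>UNIV. c i * exp (\<tau> * w i)"]
      by (simp add: norm_minus_commute distrib_right)
  qed
  then show ?thesis
    by (simp add: a_def)
qed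

section \<open>The toric cone\<close>

definition torus_image :: "('m::finite \<Rightarrow> int^'n::finite) \<Rightarrow> (complex^'m) set" where
  "torus_image r = {(\<chi> i. t * (\<Prod>j\<in>UNIV. (x $ j) powi (r i $ j))) | t x.
     t \<noteq> 0 \<and> (\<forall>j. x $ j \<noteq> 0)}"

definition affine_relation :: "('m::finite \<Rightarrow> int^'n::finite) \<Rightarrow> int^'m \<Rightarrow> bool" where
  "affine_relation r D \<longleftrightarrow> (\<Sum>i\<in>UNIV. D $ i) = 0 \<and> (\<Sum>i\<in>UNIV. D $ i *s r i) = 0"

lemma toric_cone_torus_image: "toric_cone r = zariski_closure (torus_image r)"
  by (simp add: toric_cone_def torus_image_def)

lemma zariski_closure_vanishing:
  "z \<in> zariski_closure S \<Longrightarrow> poly_fun f \<Longrightarrow> (\<And>s. s \<in> S \<Longrightarrow> f s = 0) \<Longrightarrow> f z = 0"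
  by (auto simp: zariski_closure_def)

lemma zariski_closure_poly_nonzero:
  "z \<in> zariski_closure S \<Longrightarrow> poly_fun f \<Longrightarrow> f z \<noteq> 0 \<Longrightarrow> \<exists>s\<in>S. f s \<noteq> 0"
  using zariski_closure_vanishing by blast

lemma torus_image_subset_toric_cone: "torus_image r \<subseteq> toric_cone r"
  by (auto simp: toric_cone_torus_image zariski_closure_def)

lemma torus_image_nonzero: "s \<in> torus_image r \<Longrightarrow> s $ i \<noteq> 0"
  by (auto simp: torus_image_def)

lemma poly_fun_diff:
  assumes "poly_fun f" and "poly_fun g"
  shows "poly_fun (\<lambda>z. f z - g z)"
proof -
  have "poly_fun (\<lambda>z. f z + (- 1) * g z)"
    using assms by (intro pf_add pf_mult pf_const)
  then show ?thesis
    by simp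
qed

lemma poly_fun_prod:
  "finite A \<Longrightarrow> (\<And>a. a \<in> A \<Longrightarrow> poly_fun (f a)) \<Longrightarrow> poly_fun (\<lambda>z. \<Prod>a\<in>A. f a z)"
proof (induction A rule: finite_induct)
  case empty
  then show ?case
    using pf_const[of 1] by simp
next
  case (insert a A)
  then show ?case
    using pf_mult[of "f a" "\<lambda>z. \<Prod>a\<in>A. f a z"] by simp
qed

lemma poly_fun_power: "poly_fun f \<Longrightarrow> poly_fun (\<lambda>z. f z ^ n)"
  by (induction n) (simp_all add: pf_const pf_mult)

lemma poly_fun_monomial: "poly_fun (\<lambda>z::complex^'m::finite. \<Prod>i\<in>UNIV. z $ i ^ a i)"
  by (intro poly_fun_prod poly_fun_power pf_coord) simp

lemma poly_fun_pointwise_scale: "poly_fun f \<Longrightarrow> poly_fun (\<lambda>z. f (e * z))"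
  by (induction rule: poly_fun.induct) (auto intro: poly_fun.intros)

lemma torus_image_mult:
  assumes "e \<in> torus_image r" and "s \<in> torus_image r"
  shows "e * s \<in> torus_image r"
proof -
  obtain t x t' x' where t: "t \<noteq> 0" "\<forall>j. x $ j \<noteq> 0" "t' \<noteq> 0" "\<forall>j. x' $ j \<noteq> 0"
    and e: "e = (\<chi> i. t * (\<Prod>j\<in>UNIV. (x $ j) powi (r i $ j)))"
    and s: "s = (\<chi> i. t' * (\<Prod>j\<in>UNIV. (x' $ j) powi (r i $ j)))"
    using assms by (auto simp: torus_image_def)
  have "e * s = (\<chi> i. (t * t') * (\<Prod>j\<in>UNIV. ((x * x') $ j) powi (r i $ j)))"
    by (simp add: e s vec_eq_iff power_int_mult_distrib prod.distrib mult_ac)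
  moreover have "t * t' \<noteq> 0" and "\<forall>j. (x * x') $ j \<noteq> 0"
    using t by simp_all
  ultimately show ?thesis
    unfolding torus_image_def by blast
qed

text \<open>Multiplication by a torus point is a linear automorphism that preserves the torus
  image, hence also its Zariski closure.\<close>
lemma toric_cone_mult:
  assumes e: "e \<in> torus_image r" and q: "q \<in> toric_cone r"
  shows "e * q \<in> toric_cone r"
  unfolding toric_cone_torus_image zariski_closure_def
proof (intro CollectI allI impI)
  fix f :: "complex^'a \<Rightarrow> complex"
  assume f: "poly_fun f" and vanish: "\<forall>s\<in>torus_image r. f s = 0"
  show "f (e * q) = 0"
    using zariski_closure_vanishing[OF q[unfolded toric_cone_torus_image] poly_fun_pointwise_scale[OF f]]
      vanish torus_image_mult[OF e] by blast
qed

lemma power_int_sum: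
  fixes x :: complex
  assumes "x \<noteq> 0"
  shows "finite A \<Longrightarrow> x powi (\<Sum>a\<in>A. e a) = (\<Prod>a\<in>A. x powi e a)"
  by (induction A rule: finite_induct) (auto simp: power_int_add assms)

lemma torus_image_monomial:
  fixes x :: "complex^'n::finite" and r :: "'m::finite \<Rightarrow> int^'n"
  assumes x: "\<forall>j. x $ j \<noteq> 0"
  shows "(\<Prod>i\<in>UNIV. (t * (\<Prod>j\<in>UNIV. x $ j powi (r i $ j))) ^ a i) =
     t ^ (\<Sum>i\<in>UNIV. a i) * (\<Prod>j\<in>UNIV. x $ j powi (\<Sum>i\<in>UNIV. r i $ j * int (a i)))"
proof -
  have "(\<Prod>i\<in>UNIV. (t * (\<Prod>j\<in>UNIV. x $ j powi (r i $ j))) ^ a i) =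
      (\<Prod>i\<in>UNIV. t ^ a i) * (\<Prod>i\<in>UNIV. \<Prod>j\<in>UNIV. x $ j powi (r i $ j * int (a i)))"
    by (simp add: power_mult_distrib prod.distrib prod_power_distrib power_int_power')
  also have "(\<Prod>i\<in>UNIV. t ^ a i) = t ^ (\<Sum>i\<in>UNIV. a i)"
    by (simp add: power_sum)
  also have "(\<Prod>i\<in>UNIV. \<Prod>j\<in>UNIV. x $ j powi (r i $ j * int (a i))) =
      (\<Prod>j\<in>UNIV. \<Prod>i\<in>UNIV. x $ j powi (r i $ j * int (a i)))"
    by (rule prod.swap)
  also have "\<dots> = (\<Prod>j\<in>UNIV. x $ j powi (\<Sum>i\<in>UNIV. r i $ j * int (a i)))"
    using x by (simp add: power_int_sum)
  finally show ?thesis .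
qed

lemma toric_cone_binomial:
  assumes "(\<Sum>i\<in>UNIV. a i) = (\<Sum>i\<in>UNIV. b i)"
    and "\<And>j. (\<Sum>i\<in>UNIV. r i $ j * int (a i)) = (\<Sum>i\<in>UNIV. r i $ j * int (b i))"
    and "z \<in> toric_cone r"
  shows "(\<Prod>i\<in>UNIV. z $ i ^ a i) = (\<Prod>i\<in>UNIV. z $ i ^ b i)"
proof -
  have "(\<Prod>i\<in>UNIV. s $ i ^ a i) - (\<Prod>i\<in>UNIV. s $ i ^ b i) = 0" if s_torus: "s \<in> torus_image r" for s
  proof -
    obtain t x where x: "\<forall>j. x $ j \<noteq> 0" and s: "s = (\<chi> i. t * (\<Prod>j\<in>UNIV. (x $ j) powi (r i $ j)))"
      using s_torus by (auto simp: torus_image_def)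
    show ?thesis
      using torus_image_monomial[OF x, of t r a] torus_image_monomial[OF x, of t r b] s assms(1,2)
      by simp
  qed
  then have "(\<Prod>i\<in>UNIV. z $ i ^ a i) - (\<Prod>i\<in>UNIV. z $ i ^ b i) = 0"
    using zariski_closure_vanishing[OF assms(3)[unfolded toric_cone_torus_image]
        poly_fun_diff[OF poly_fun_monomial poly_fun_monomial]] by blast
  then show ?thesis
    by simp
qed

lemma toric_cone_relation_monomial:
  assumes "z \<in> toric_cone r" and "\<forall>i. z $ i \<noteq> 0" and "affine_relation r D"
  shows "(\<Prod>i\<in>UNIV. z $ i powi D $ i) = 1"
proof -
  define a where "a i = nat (D $ i)" for i
  define b where "b i = nat (- D $ i)" for i
  have D: "D $ i = int (a i) - int (b i)" for i
    by (simp add: a_def b_def)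
  have "int (\<Sum>i\<in>UNIV. a i) - int (\<Sum>i\<in>UNIV. b i) = (\<Sum>i\<in>UNIV. D $ i)"
    by (simp only: D of_nat_sum sum_subtractf)
  then have "(\<Sum>i\<in>UNIV. a i) = (\<Sum>i\<in>UNIV. b i)"
    using assms(3) unfolding affine_relation_def by linarith
  moreover have "(\<Sum>i\<in>UNIV. r i $ j * int (a i)) = (\<Sum>i\<in>UNIV. r i $ j * int (b i))" for j
  proof -
    have diff: "(\<Sum>i\<in>UNIV. r i $ j * int (a i)) - (\<Sum>i\<in>UNIV. r i $ j * int (b i)) = (\<Sum>i\<in>UNIV. D $ i *s r i) $ j"
      by (simp add: D sum_subtractf algebra_simps)
    have "(\<Sum>i\<in>UNIV. D $ i *s r i) = 0"
      using assms(3) by (simp add: affine_relation_def)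
    then show ?thesis
      using diff by simp
  qed
  ultimately have "(\<Prod>i\<in>UNIV. z $ i ^ a i) = (\<Prod>i\<in>UNIV. z $ i ^ b i)"
    by (rule toric_cone_binomial[OF _ _ assms(1)])
  moreover have "z $ i powi D $ i = z $ i ^ a i / z $ i ^ b i" for i
    using assms(2) by (simp add: D power_int_diff)
  then have "(\<Prod>i\<in>UNIV. z $ i powi D $ i) = (\<Prod>i\<in>UNIV. z $ i ^ a i) / (\<Prod>i\<in>UNIV. z $ i ^ b i)"
    by (simp add: prod_dividef)
  ultimately show ?thesis
    using assms(2) by simp
qed

section \<open>Affine relations of the configuration\<close>

definition of_int_vec :: "int^'m \<Rightarrow> complex^'m::finite" where
  "of_int_vec f = (\<chi> i. of_int (f $ i))"

lemma of_int_vec_diff: "of_int_vec (f - g) = of_int_vec f - of_int_vec g"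
  by (simp add: of_int_vec_def vec_eq_iff)

lemma of_int_vec_scale: "of_int_vec (c *s f) = of_int c *s of_int_vec f"
  by (simp add: of_int_vec_def vec_eq_iff)

lemma of_int_vec_sum: "of_int_vec (\<Sum>j\<in>A. f j) = (\<Sum>j\<in>A. of_int_vec (f j))"
  by (simp add: of_int_vec_def vec_eq_iff)

lemma of_int_vec_axis: "of_int_vec (axis i 1) = axis i 1"
  by (simp add: of_int_vec_def vec_eq_iff axis_def)

lemma lin_form_of_int_vec_affine_values:
  "lin_form (of_int_vec f) (affine_values r u0 u) =
     u0 * of_int (\<Sum>i\<in>UNIV. f $ i) + (\<Sum>j\<in>UNIV. u $ j * of_int ((\<Sum>i\<in>UNIV. f $ i *s r i) $ j))"
proof -
  have "lin_form (of_int_vec f) (affine_values r u0 u) =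
      u0 * of_int (\<Sum>i\<in>UNIV. f $ i) + (\<Sum>i\<in>UNIV. \<Sum>j\<in>UNIV. u $ j * (of_int (f $ i) * of_int (r i $ j)))"
    by (simp add: lin_form_def of_int_vec_def affine_values_def distrib_left sum.distrib
        sum_distrib_left sum_distrib_right mult_ac)
  also have "(\<Sum>i\<in>UNIV. \<Sum>j\<in>UNIV. u $ j * (of_int (f $ i) * of_int (r i $ j))) =
      (\<Sum>j\<in>UNIV. u $ j * of_int ((\<Sum>i\<in>UNIV. f $ i *s r i) $ j))"
    by (subst sum.swap) (simp add: sum_distrib_left)
  finally show ?thesis .
qed

lemma affine_relation_iff_annihilates_affine_values:
  "affine_relation r D \<longleftrightarrow> (\<forall>u0 u. lin_form (of_int_vec D) (affine_values r u0 u) = 0)"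
proof
  assume "\<forall>u0 u. lin_form (of_int_vec D) (affine_values r u0 u) = 0"
  then have "of_int (\<Sum>i\<in>UNIV. D $ i) = (0::complex)"
    and "of_int ((\<Sum>i\<in>UNIV. D $ i *s r i) $ j) = (0::complex)" for j
    using lin_form_of_int_vec_affine_values[of D r 1 0] lin_form_of_int_vec_affine_values[of D r 0 "axis j 1"]
    by (simp_all add: sum_axis_mult)
  then show "affine_relation r D"
    unfolding affine_relation_def of_int_eq_0_iff by (simp add: vec_eq_iff)
qed (simp add: affine_relation_def lin_form_of_int_vec_affine_values)

lemma good_config_unit_preimages:
  fixes r :: "'m::finite \<Rightarrow> int^'n::finite"
  assumes "good_config r"
  obtains A :: "'n \<Rightarrow> int^'m" where "\<And>j. (\<Sum>i\<in>UNIV. A j $ i *s r i) = axis j 1"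
proof -
  have "\<forall>j. \<exists>a::'m \<Rightarrow> int. axis j 1 = (\<Sum>i\<in>UNIV. a i *s r i)"
    using assms by (auto simp: good_config_def)
  then obtain a :: "'n \<Rightarrow> 'm \<Rightarrow> int" where "\<And>j. axis j 1 = (\<Sum>i\<in>UNIV. a j i *s r i)"
    by metis
  then show ?thesis
    using that[of "\<lambda>j. \<chi> i. a j i"] by simp
qed

lemma config_on_hyperplane_if_relation_sums_vanish:
  fixes r :: "'m::finite \<Rightarrow> int^'n::finite"
  assumes A: "\<And>j. (\<Sum>i\<in>UNIV. A j $ i *s r i) = axis j 1"
    and sum0: "\<And>a :: int^'m. (\<Sum>i\<in>UNIV. a $ i *s r i) = 0 \<Longrightarrow> (\<Sum>i\<in>UNIV. a $ i) = 0"
  shows "(\<Sum>j\<in>UNIV. r i0 $ j * (\<Sum>i\<in>UNIV. A j $ i)) = 1"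
proof -
  define b where "b = axis i0 1 - (\<Sum>j\<in>UNIV. r i0 $ j *s A j)"
  have swap: "(\<Sum>i\<in>UNIV. (\<Sum>j\<in>UNIV. r i0 $ j *s A j) $ i *s r i) =
      (\<Sum>j\<in>UNIV. r i0 $ j *s (\<Sum>i\<in>UNIV. A j $ i *s r i))"
    unfolding vec_eq_iff by (simp add: sum_distrib_left sum_distrib_right mult.assoc, rule allI, rule sum.swap)
  have "(\<Sum>i\<in>UNIV. b $ i *s r i) =
      (\<Sum>i\<in>UNIV. axis i0 1 $ i *s r i) - (\<Sum>i\<in>UNIV. (\<Sum>j\<in>UNIV. r i0 $ j *s A j) $ i *s r i)"
    by (simp only: b_def vector_minus_component vector_sub_rdistrib sum_subtractf)
  also have "\<dots> = r i0 - (\<Sum>j\<in>UNIV. r i0 $ j *s axis j 1)"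
    by (simp only: sum_axis_scale swap A)
  also have "\<dots> = 0"
    by (simp only: basis_expansion diff_self)
  finally have "(\<Sum>i\<in>UNIV. b $ i) = 0"
    by (rule sum0)
  moreover have "(\<Sum>i\<in>UNIV. (\<Sum>j\<in>UNIV. r i0 $ j *s A j) $ i) = (\<Sum>j\<in>UNIV. r i0 $ j * (\<Sum>i\<in>UNIV. A j $ i))"
    by (simp add: sum_distrib_left) (rule sum.swap)
  moreover have "(\<Sum>i\<in>UNIV. axis i0 1 $ i) = (1::int)"
    using sum_axis_mult[of i0 "\<lambda>_. 1"] by simp
  ultimately show ?thesis
    by (simp add: b_def sum_subtractf)
qed

lemma good_config_not_on_hyperplane:
  fixes r :: "'m::finite \<Rightarrow> int^'n::finite"
  assumes "good_config r"
  shows "\<not> (\<forall>i. (\<Sum>j\<in>UNIV. r i $ j * w $ j) = 1)"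
proof
  assume one: "\<forall>i. (\<Sum>j\<in>UNIV. r i $ j * w $ j) = 1"
  define W :: "real^'n" where "W = (\<chi> j. real_of_int (w $ j))"
  define R where "R i = ((\<chi> j. real_of_int (r i $ j)) :: real^'n)" for i
  have "W \<bullet> R i = 1" for i
    using one by (simp add: W_def R_def inner_vec_def mult.commute flip: of_int_sum of_int_mult)
  then have sub: "range R \<subseteq> {x. W \<bullet> x = 1}"
    by auto
  have "W \<noteq> 0"
  proof
    assume "W = 0"
    then have "w = 0"
      by (simp add: W_def vec_eq_iff)
    then show False
      using one by simp
  qed
  then have "aff_dim (range R) \<le> int CARD('n) - 1"
    using aff_dim_subset[OF sub] by simp
  moreover have "aff_dim (range R) = int CARD('n)"
    using assms by (simp add: good_config_def R_def)
  ultimately show False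
    by simp
qed

text \<open>Otherwise every linear relation would have coefficient sum 0; applied to the relations
  \<open>e\<^sub>i - \<Sum>\<^sub>j r\<^sub>i\<^sub>j A\<^sub>j\<close> this puts all points of the configuration on the affine hyperplane
  \<open>\<langle>w, x\<rangle> = 1\<close> with \<open>w\<^sub>j = \<Sum>\<^sub>i A\<^sub>j\<^sub>i\<close>, contradicting full affine dimension.\<close>
lemma exists_linear_relation_nonzero_sum:
  fixes r :: "'m::finite \<Rightarrow> int^'n::finite"
  assumes "good_config r"
  obtains a0 :: "int^'m" where "(\<Sum>i\<in>UNIV. a0 $ i *s r i) = 0" and "(\<Sum>i\<in>UNIV. a0 $ i) \<noteq> 0"
proof -
  have "\<exists>a0::int^'m. (\<Sum>i\<in>UNIV. a0 $ i *s r i) = 0 \<and> (\<Sum>i\<in>UNIV. a0 $ i) \<noteq> 0"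
  proof (rule ccontr)
    assume "\<nexists>a0::int^'m. (\<Sum>i\<in>UNIV. a0 $ i *s r i) = 0 \<and> (\<Sum>i\<in>UNIV. a0 $ i) \<noteq> 0"
    then have sum0: "(\<Sum>i\<in>UNIV. a $ i) = 0" if "(\<Sum>i\<in>UNIV. a $ i *s r i) = 0" for a :: "int^'m"
      using that by blast
    obtain A where A: "\<And>j. (\<Sum>i\<in>UNIV. A j $ i *s r i) = axis j 1"
      using good_config_unit_preimages[OF assms] by blast
    have "\<forall>i. (\<Sum>j\<in>UNIV. r i $ j * (\<chi> j. \<Sum>l\<in>UNIV. A j $ l) $ j) = 1"
      using config_on_hyperplane_if_relation_sums_vanish[OF A sum0] by simp
    then show False
      using good_config_not_on_hyperplane[OF assms] by blast
  qed
  then show ?thesis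
    using that by blast
qed

text \<open>An explicit integer basis of the relations: with \<open>A\<^sub>j \<mapsto> e\<^sub>j\<close> and \<open>a\<^sub>0 \<mapsto> 0\<close>,
  \<open>N = \<Sum> a\<^sub>0 \<noteq> 0\<close>, the rational linear map \<open>v \<mapsto> (\<langle>a\<^sub>0, v\<rangle> / N, \<langle>A\<^sub>j, v\<rangle> - w\<^sub>j \<langle>a\<^sub>0, v\<rangle> / N)\<close>
  recovers the coefficients of an affine-values vector, and \<open>D\<^sub>i\<^sub>0\<close> is \<open>N\<close> times the
  \<open>i\<^sub>0\<close>-th coordinate of the residual.\<close>
lemma affine_values_cut_out_by_relations:
  fixes r :: "'m::finite \<Rightarrow> int^'n::finite"
  assumes "good_config r"
  obtains D :: "'m \<Rightarrow> int^'m" where "\<And>i0. affine_relation r (D i0)"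
    and "\<And>v. (\<And>i0. lin_form (of_int_vec (D i0)) v = 0) \<Longrightarrow> \<exists>y0 y. v = affine_values r y0 y"
proof -
  obtain A where A: "\<And>j. (\<Sum>i\<in>UNIV. A j $ i *s r i) = axis j 1"
    using good_config_unit_preimages[OF assms] by blast
  obtain a0 where a0: "(\<Sum>i\<in>UNIV. a0 $ i *s r i) = 0" "(\<Sum>i\<in>UNIV. a0 $ i) \<noteq> 0"
    using exists_linear_relation_nonzero_sum[OF assms] by blast
  define N where "N = (\<Sum>i\<in>UNIV. a0 $ i)"
  define w where "w j = (\<Sum>i\<in>UNIV. A j $ i)" for j
  define y0 where "y0 v = lin_form (of_int_vec a0) v / of_int N" for v
  define y where "y v = (\<chi> j. lin_form (of_int_vec (A j)) v - of_int (w j) * y0 v)" for v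
  define D where "D i0 = N *s axis i0 1 - a0 - (\<Sum>j\<in>UNIV. r i0 $ j *s (N *s A j - w j *s a0))" for i0
  have N: "(of_int N :: complex) \<noteq> 0"
    unfolding of_int_eq_0_iff N_def by (rule a0(2))
  have residual: "lin_form (of_int_vec (D i0)) v = of_int N * (v - affine_values r (y0 v) (y v)) $ i0"
    for i0 v
  proof -
    have "lin_form (of_int_vec (D i0)) v = of_int N * v $ i0 - lin_form (of_int_vec a0) v -
        (\<Sum>j\<in>UNIV. of_int (r i0 $ j) * (of_int N * lin_form (of_int_vec (A j)) v -
           of_int (w j) * lin_form (of_int_vec a0) v))"
      by (simp add: D_def of_int_vec_diff of_int_vec_scale of_int_vec_sum of_int_vec_axis
          lin_form_diff_left lin_form_scale_left lin_form_sum_left lin_form_axis_left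
          right_diff_distrib mult.assoc)
    also have "\<dots> = of_int N * (v - affine_values r (y0 v) (y v)) $ i0"
      using N by (simp add: y0_def y_def affine_values_def algebra_simps sum_distrib_left
          sum_subtractf)
    finally show ?thesis .
  qed
  have of_int_axis: "of_int (axis j 1 $ l) = (axis j 1 $ l :: complex)" for j l
    by (simp add: axis_def)
  have "y0 (affine_values r u0 u) = u0" and "y (affine_values r u0 u) = u" for u0 u
    using N by (simp_all add: y0_def y_def w_def N_def vec_eq_iff lin_form_of_int_vec_affine_values
        a0(1) A of_int_axis sum_mult_axis)
  then have "lin_form (of_int_vec (D i0)) (affine_values r u0 u) = 0" for i0 u0 u
    by (simp add: residual)
  then have "affine_relation r (D i0)" for i0
    by (simp add: affine_relation_iff_annihilates_affine_values)
  moreover have "\<exists>y0 y. v = affine_values r y0 y" if "\<And>i0. lin_form (of_int_vec (D i0)) v = 0" for v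
    using that N by (auto simp: residual vec_eq_iff)
  ultimately show ?thesis
    using that by blast
qed

section \<open>Logarithmic coordinates near the torus\<close>

definition exp_vec :: "complex^'m \<Rightarrow> complex^'m::finite" where
  "exp_vec v = (\<chi> i. exp (v $ i))"

lemma exp_vec_in_torus_image: "exp_vec (affine_values r y0 y) \<in> torus_image r"
proof -
  have "exp (affine_values r y0 y $ i) =
      exp y0 * (\<Prod>j\<in>UNIV. (\<chi> j. exp (y $ j)) $ j powi (r i $ j))" for i
    by (simp add: affine_values_def exp_add exp_sum exp_power_int mult_ac)
  then have "exp_vec (affine_values r y0 y) =
      (\<chi> i. exp y0 * (\<Prod>j\<in>UNIV. (\<chi> j. exp (y $ j)) $ j powi (r i $ j)))"
    by (simp add: exp_vec_def vec_eq_iff)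
  moreover have "exp y0 \<noteq> 0" and "\<forall>j. (\<chi> j. exp (y $ j)) $ j \<noteq> 0"
    by simp_all
  ultimately show ?thesis
    unfolding torus_image_def by blast
qed

lemma norm_le_sum_nth: "norm (x :: complex^'m::finite) \<le> (\<Sum>i\<in>UNIV. norm (x $ i))"
  by (simp add: norm_vec_def L2_set_le_sum)

lemma norm_lin_form_le:
  assumes "\<And>i. norm (v $ i) \<le> s"
  shows "norm (lin_form c v) \<le> (\<Sum>i\<in>UNIV. norm (c $ i)) * s"
  unfolding lin_form_def sum_distrib_right
  by (rule order_trans[OF norm_sum sum_mono]) (simp add: norm_mult assms mult_left_mono)

lemma norm_mult_exp_vec_diff_le:
  assumes "\<And>i. norm (v $ i) \<le> s" and "s \<le> 1"
  shows "norm (q * exp_vec v - q) \<le> (\<Sum>i\<in>UNIV. norm (q $ i)) * exp 1 * s"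
proof -
  have "norm (exp (v $ i) - 1) \<le> exp 1 * s" for i
  proof -
    have "norm (v $ i) \<le> 1"
      using assms order_trans by blast
    then have "norm (exp (v $ i) - 1) \<le> exp 1 * norm (v $ i)"
      using norm_exp_taylor_remainder_le[of "v $ i" 0] by simp
    also have "\<dots> \<le> exp 1 * s"
      using assms(1) by simp
    finally show ?thesis .
  qed
  moreover have "(q * exp_vec v - q) $ i = q $ i * (exp (v $ i) - 1)" for i
    by (simp add: exp_vec_def algebra_simps)
  ultimately have "norm ((q * exp_vec v - q) $ i) \<le> norm (q $ i) * (exp 1 * s)" for i
    by (simp add: norm_mult mult_left_mono)
  then have "(\<Sum>i\<in>UNIV. norm ((q * exp_vec v - q) $ i)) \<le> (\<Sum>i\<in>UNIV. norm (q $ i)) * (exp 1 * s)"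
    unfolding sum_distrib_right by (rule sum_mono)
  then show ?thesis
    using norm_le_sum_nth[of "q * exp_vec v - q"] by (simp add: mult.assoc)
qed

lemma norm_ln_one_plus_le:
  fixes u :: complex
  assumes "norm u \<le> 1/2"
  shows "norm (ln (1 + u)) \<le> 2 * norm u"
proof -
  have "norm (ln (1 + u) - u) \<le> norm u ^ 2 / (1 - norm u)"
    using assms by (intro Ln_approx_linear) simp
  also have "\<dots> \<le> norm u"
    using assms by (simp add: divide_le_eq power2_eq_square mult_left_mono)
  finally show ?thesis
    using norm_triangle_ineq2[of "ln (1 + u)" u] by simp
qed

lemma exp_ln_ratio:
  fixes z q :: complex
  assumes "q \<noteq> 0" and "norm (z - q) \<le> norm q / 2"
  shows "z = q * exp (ln (z / q))" and "norm (ln (z / q)) \<le> 2 * norm (z - q) / norm q"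
proof -
  define u where "u = z / q - 1"
  have zq: "z / q = 1 + u"
    by (simp add: u_def)
  have u: "norm u = norm (z - q) / norm q"
    using assms(1) by (simp add: u_def norm_divide diff_divide_distrib flip: norm_divide)
  then have "norm u \<le> 1/2"
    using assms by (simp add: divide_le_eq)
  have "z / q \<noteq> 0"
  proof
    assume "z / q = 0"
    then have "u = -1"
      using zq by (simp add: add_eq_0_iff)
    then show False
      using \<open>norm u \<le> 1/2\<close> by simp
  qed
  then show "z = q * exp (ln (z / q))"
    using assms(1) by simp
  show "norm (ln (z / q)) \<le> 2 * norm (z - q) / norm q"
    using norm_ln_one_plus_le[OF \<open>norm u \<le> 1/2\<close>] zq u by simp
qed

lemma exp_vec_ln_ratio:
  fixes z q :: "complex^'m::finite"
  assumes "\<rho> > 0" and "\<And>i. \<rho> \<le> norm (q $ i)" and "norm (z - q) \<le> \<rho> / 2"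
  shows "z = q * exp_vec (\<chi> i. ln (z $ i / q $ i))"
    and "norm (ln (z $ i / q $ i)) \<le> 2 / \<rho> * norm (z - q)"
proof -
  have q: "q $ i \<noteq> 0" for i
    using assms(1) assms(2)[of i] by auto
  have close: "norm (z $ i - q $ i) \<le> norm (q $ i) / 2" for i
    using assms(2)[of i] assms(3) Finite_Cartesian_Product.norm_nth_le[of "z - q" i] by simp
  have "z $ i = (q * exp_vec (\<chi> i. ln (z $ i / q $ i))) $ i" for i
    unfolding vector_mult_component exp_vec_def vec_lambda_beta by (rule exp_ln_ratio(1)[OF q close])
  then show "z = q * exp_vec (\<chi> i. ln (z $ i / q $ i))"
    unfolding vec_eq_iff by blast
  have "norm (ln (z $ i / q $ i)) \<le> 2 * norm (z $ i - q $ i) / norm (q $ i)"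
    by (rule exp_ln_ratio(2)[OF q close])
  also have "\<dots> \<le> 2 * norm (z - q) / \<rho>"
    using assms(1) assms(2)[of i] Finite_Cartesian_Product.norm_nth_le[of "z - q" i]
    by (intro frac_le) auto
  finally show "norm (ln (z $ i / q $ i)) \<le> 2 / \<rho> * norm (z - q)"
    by simp
qed

text \<open>A relation among torus coordinates becomes, after taking logarithms, a linear relation
  up to a period \<open>2\<pi>i\<close>; small logarithms leave no room for a nonzero period.\<close>
lemma toric_cone_log_relation:
  assumes "q \<in> toric_cone r" and "\<forall>i. q $ i \<noteq> 0" and "q * exp_vec v \<in> toric_cone r"
    and "affine_relation r D" and "norm (lin_form (of_int_vec D) v) < 2 * pi"
  shows "lin_form (of_int_vec D) v = 0"
proof -
  let ?L = "lin_form (of_int_vec D) v"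
  have "\<forall>i. (q * exp_vec v) $ i \<noteq> 0"
    using assms(2) by (simp add: exp_vec_def)
  then have "(\<Prod>i\<in>UNIV. (q * exp_vec v) $ i powi D $ i) = 1"
    using toric_cone_relation_monomial assms(3,4) by blast
  moreover have "(\<Prod>i\<in>UNIV. q $ i powi D $ i) = 1"
    using toric_cone_relation_monomial assms(1,2,4) by blast
  ultimately
  have "(\<Prod>i\<in>UNIV. exp (v $ i) powi D $ i) = 1"
    using assms(2) by (simp add: exp_vec_def power_int_mult_distrib prod.distrib)
  then have "exp ?L = exp 0"
    by (simp add: lin_form_def of_int_vec_def exp_sum exp_power_int)
  then obtain n :: int where n: "?L = of_int (2 * n) * pi * \<i>"
    unfolding exp_eq by auto
  have "norm ?L = 2 * pi * \<bar>real_of_int n\<bar>"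
    by (simp add: n norm_mult)
  then have "n = 0"
    using assms(5) pi_gt_zero by (simp add: mult_less_cancel_left1)
  then show ?thesis
    using n by simp
qed

lemma toric_cone_log_coordinates:
  fixes r :: "'m::finite \<Rightarrow> int^'n::finite"
  assumes "good_config r" and "q \<in> toric_cone r" and "\<forall>i. q $ i \<noteq> 0"
  obtains \<delta> L where "\<delta> > 0" and "L \<ge> 0" and "L * \<delta> \<le> 1"
    and "\<And>z. z \<in> toric_cone r \<Longrightarrow> norm (z - q) < \<delta> \<Longrightarrow> \<exists>y0 y.
      z = q * exp_vec (affine_values r y0 y) \<and> (\<forall>i. norm (affine_values r y0 y $ i) \<le> L * norm (z - q))"
proof -
  obtain D :: "'m \<Rightarrow> int^'m" where D_rel: "\<And>i0. affine_relation r (D i0)"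
    and D_cut: "\<And>v. (\<And>i0. lin_form (of_int_vec (D i0)) v = 0) \<Longrightarrow> \<exists>y0 y. v = affine_values r y0 y"
    using affine_values_cut_out_by_relations[OF assms(1)] by blast
  define \<rho> where "\<rho> = Min (range (\<lambda>i. norm (q $ i)))"
  have \<rho>_le: "\<rho> \<le> norm (q $ i)" for i
    unfolding \<rho>_def by (rule Min_le) auto
  have \<rho>: "\<rho> > 0"
    unfolding \<rho>_def using assms(3) by (subst Min_gr_iff) auto
  define M where "M = 1 + (\<Sum>i0\<in>UNIV. \<Sum>i\<in>UNIV. norm (of_int_vec (D i0) $ i))"
  have "(\<Sum>i\<in>UNIV. norm (of_int_vec (D i0) $ i)) \<le> (\<Sum>i0\<in>UNIV. \<Sum>i\<in>UNIV. norm (of_int_vec (D i0) $ i))" for i0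
    by (rule member_le_sum) (auto intro: sum_nonneg)
  then have M: "M \<ge> 1" "(\<Sum>i\<in>UNIV. norm (of_int_vec (D i0) $ i)) \<le> M" for i0
    by (simp_all add: M_def sum_nonneg add_increasing)
  define L where "L = 2 / \<rho>"
  define \<delta> where "\<delta> = \<rho> / (2 * M)"
  show ?thesis
  proof (rule that)
    show "\<delta> > 0" and "L \<ge> 0" and "L * \<delta> \<le> 1"
      using \<rho> M(1) by (simp_all add: \<delta>_def L_def field_simps)
    fix z assume z: "z \<in> toric_cone r" "norm (z - q) < \<delta>"
    have "\<delta> \<le> \<rho> / 2"
      using \<rho> M(1) by (simp add: \<delta>_def field_simps)
    then have close: "norm (z - q) \<le> \<rho> / 2"
      using z(2) by linarith
    define v where "v = (\<chi> i. ln (z $ i / q $ i))"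
    have zv: "z = q * exp_vec v"
      unfolding v_def by (rule exp_vec_ln_ratio(1)[OF \<rho> \<rho>_le close])
    have v: "norm (v $ i) \<le> L * norm (z - q)" for i
      unfolding v_def L_def vec_lambda_beta by (rule exp_vec_ln_ratio(2)[OF \<rho> \<rho>_le close])
    have zq: "q * exp_vec v \<in> toric_cone r"
      using z(1) unfolding zv .
    have "norm (lin_form (of_int_vec (D i0)) v) < 2 * pi" for i0
    proof -
      have "0 \<le> L * norm (z - q)"
        using \<rho> by (simp add: L_def)
      with M(2)[of i0] have "(\<Sum>i\<in>UNIV. norm (of_int_vec (D i0) $ i)) * (L * norm (z - q)) \<le> M * (L * norm (z - q))"
        by (rule mult_right_mono)
      then have "norm (lin_form (of_int_vec (D i0)) v) \<le> M * (L * norm (z - q))"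
        using norm_lin_form_le[OF v, of "of_int_vec (D i0)"] by linarith
      also have "\<dots> \<le> M * (L * \<delta>)"
        using z(2) M(1) \<rho> by (intro mult_left_mono) (auto simp: L_def)
      also have "\<dots> = 1"
        using \<rho> M(1) by (simp add: \<delta>_def L_def)
      finally show ?thesis
        using pi_gt3 by linarith
    qed
    then have "lin_form (of_int_vec (D i0)) v = 0" for i0
      using toric_cone_log_relation[OF assms(2,3) zq D_rel] by blast
    then obtain y0 y where "v = affine_values r y0 y"
      using D_cut by blast
    then show "\<exists>y0 y. z = q * exp_vec (affine_values r y0 y) \<and>
        (\<forall>i. norm (affine_values r y0 y $ i) \<le> L * norm (z - q))"
      using zv v by blast
  qed
qed

section \<open>Jets of the toric cone at torus points\<close>

lemma affine_values_scale: "t *s affine_values r y0 y = affine_values r (t * y0) (t *s y)"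
  by (simp add: affine_values_def vec_eq_iff algebra_simps sum_distrib_left)

lemma toric_cone_exp_curve:
  assumes "q \<in> toric_cone r"
  shows "q * exp_vec (t *s affine_values r y0 y) \<in> toric_cone r"
  using toric_cone_mult[OF exp_vec_in_torus_image assms] by (simp add: affine_values_scale mult.commute)

lemma jet_kernel_along_exp_curve:
  assumes "q \<in> toric_cone r" and "c \<in> jet_kernel (toric_cone r) k q"
  obtains \<eta> C where "\<eta> > 0" and "\<And>\<tau>. \<tau> \<noteq> 0 \<Longrightarrow> norm \<tau> < \<eta> \<Longrightarrow>
    norm (\<Sum>i\<in>UNIV. (c $ i * q $ i) * exp (\<tau> * affine_values r y0 y $ i)) \<le> C * norm \<tau> ^ Suc k"
proof -
  obtain C \<delta> where \<delta>: "\<delta> > 0" and bound: "\<And>z. z \<in> toric_cone r \<Longrightarrow> norm (z - q) < \<delta> \<Longrightarrow>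
      norm (lin_form c z) \<le> C * norm (z - q) ^ (k + 1)"
    using assms(2) by (auto simp: jet_kernel_def)
  let ?w = "affine_values r y0 y"
  define W where "W = 1 + (\<Sum>i\<in>UNIV. norm (?w $ i))"
  have "norm (?w $ i) \<le> (\<Sum>i\<in>UNIV. norm (?w $ i))" for i
    by (rule member_le_sum) auto
  then have W: "W \<ge> 1" "\<And>i. norm (?w $ i) \<le> W"
    by (simp_all add: W_def sum_nonneg add_increasing)
  define K where "K = (\<Sum>i\<in>UNIV. norm (q $ i)) * exp 1 * W"
  have K: "K \<ge> 0"
    using W by (simp add: K_def sum_nonneg)
  show ?thesis
  proof (rule that)
    show "min (1 / W) (\<delta> / (K + 1)) > 0"
      using W \<delta> K by simp
    fix \<tau> :: complex assume \<tau>: "\<tau> \<noteq> 0" "norm \<tau> < min (1 / W) (\<delta> / (K + 1))"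
    define z where "z = q * exp_vec (\<tau> *s ?w)"
    have z: "z \<in> toric_cone r"
      unfolding z_def by (rule toric_cone_exp_curve[OF assms(1)])
    have \<tau>w: "norm ((\<tau> *s ?w) $ i) \<le> W * norm \<tau>" for i
      using W(2)[of i] unfolding vector_smult_component
      by (metis mult.commute mult_left_mono norm_ge_zero norm_mult)
    have "W * norm \<tau> \<le> 1"
      using \<tau> W by (simp add: field_simps)
    from norm_mult_exp_vec_diff_le[OF \<tau>w this] have zq: "norm (z - q) \<le> K * norm \<tau>"
      by (simp add: z_def K_def mult.assoc)
    also have "K * norm \<tau> \<le> (K + 1) * norm \<tau>"
      by (simp add: mult_right_mono)
    also have "\<dots> < \<delta>"
      using \<tau> K by (simp add: field_simps)
    finally have "norm (lin_form c z) \<le> C * norm (z - q) ^ Suc k"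
      using bound[OF z] by simp
    also have "\<dots> \<le> \<bar>C\<bar> * (K * norm \<tau>) ^ Suc k"
      using zq by (intro mult_mono power_mono) auto
    also have "lin_form c z = (\<Sum>i\<in>UNIV. (c $ i * q $ i) * exp (\<tau> * ?w $ i))"
      by (simp add: lin_form_def z_def exp_vec_def mult_ac)
    finally show "norm (\<Sum>i\<in>UNIV. (c $ i * q $ i) * exp (\<tau> * ?w $ i)) \<le> \<bar>C\<bar> * K ^ Suc k * norm \<tau> ^ Suc k"
      by (simp add: power_mult_distrib mult_ac)
  qed
qed

lemma jet_kernel_imp_annihilator:
  assumes "q \<in> toric_cone r" and "c \<in> jet_kernel (toric_cone r) k q"
  shows "c * q \<in> annihilator (Ak_rows r k)"
  unfolding annihilator_Ak_rows_iff
proof (intro allI impI)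
  fix y0 y e assume "e \<le> k"
  obtain \<eta> C where "\<eta> > 0" and "\<And>\<tau>. \<tau> \<noteq> 0 \<Longrightarrow> norm \<tau> < \<eta> \<Longrightarrow>
      norm (\<Sum>i\<in>UNIV. (c $ i * q $ i) * exp (\<tau> * affine_values r y0 y $ i)) \<le> C * norm \<tau> ^ Suc k"
    using jet_kernel_along_exp_curve[OF assms] by blast
  then have "(\<Sum>i\<in>UNIV. (c $ i * q $ i) * affine_values r y0 y $ i ^ e) = 0"
    using \<open>e \<le> k\<close> by (rule power_sums_eq_0_if_exp_sum_small)
  then show "lin_form (c * q) (affine_values r y0 y ^ e) = 0"
    by (simp add: lin_form_def)
qed

lemma annihilator_imp_jet_kernel:
  assumes "good_config r" and "q \<in> toric_cone r" and "\<forall>i. q $ i \<noteq> 0"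
    and "c * q \<in> annihilator (Ak_rows r k)"
  shows "c \<in> jet_kernel (toric_cone r) k q"
proof -
  obtain \<delta> L where \<delta>: "\<delta> > 0" and L: "L \<ge> 0" "L * \<delta> \<le> 1"
    and log: "\<And>z. z \<in> toric_cone r \<Longrightarrow> norm (z - q) < \<delta> \<Longrightarrow> \<exists>y0 y.
      z = q * exp_vec (affine_values r y0 y) \<and> (\<forall>i. norm (affine_values r y0 y $ i) \<le> L * norm (z - q))"
    using toric_cone_log_coordinates[OF assms(1-3)] by blast
  define C where "C = (\<Sum>i\<in>UNIV. norm ((c * q) $ i)) * exp 1 * L ^ Suc k"
  have "norm (lin_form c z) \<le> C * norm (z - q) ^ (k + 1)"
    if z: "z \<in> toric_cone r" "norm (z - q) < \<delta>" for z
  proof -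
    obtain y0 y where zq: "z = q * exp_vec (affine_values r y0 y)"
      and small: "\<And>i. norm (affine_values r y0 y $ i) \<le> L * norm (z - q)"
      using log[OF z] by blast
    have "L * norm (z - q) \<le> L * \<delta>"
      using z(2) L(1) by (simp add: mult_left_mono)
    then have "L * norm (z - q) \<le> 1"
      using L(2) by linarith
    then have "norm ((\<Sum>i\<in>UNIV. (c * q) $ i * exp (affine_values r y0 y $ i)) -
        (\<Sum>d\<le>k. (\<Sum>i\<in>UNIV. (c * q) $ i * affine_values r y0 y $ i ^ d) / fact d))
      \<le> (\<Sum>i\<in>UNIV. norm ((c * q) $ i)) * exp 1 * (L * norm (z - q)) ^ Suc k"
      using norm_exp_sum_taylor_remainder_le[of "\<lambda>i. affine_values r y0 y $ i"] small by blast
    moreover have "(\<Sum>i\<in>UNIV. (c * q) $ i * affine_values r y0 y $ i ^ d) = 0" if "d \<le> k" for d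
      using assms(4) that by (simp add: annihilator_Ak_rows_iff lin_form_def)
    moreover have "lin_form c z = (\<Sum>i\<in>UNIV. (c * q) $ i * exp (affine_values r y0 y $ i))"
      by (simp add: zq lin_form_def exp_vec_def mult_ac)
    ultimately show ?thesis
      by (simp add: C_def power_mult_distrib mult_ac)
  qed
  then show ?thesis
    unfolding jet_kernel_def using \<delta> by blast
qed

lemma annihilator_image_mult: "c \<in> annihilator ((*) q ` S) \<longleftrightarrow> c * q \<in> annihilator S"
  by (simp add: annihilator_def lin_form_def mult_ac)

lemma jet_kernel_toric_cone:
  fixes r :: "'m::finite \<Rightarrow> int^'n::finite"
  assumes "good_config r" and "q \<in> toric_cone r" and "\<forall>i. q $ i \<noteq> 0"
  shows "jet_kernel (toric_cone r) k q = annihilator ((*) q ` Ak_rows r k)"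
  using jet_kernel_imp_annihilator[OF assms(2)] annihilator_imp_jet_kernel[OF assms]
  by (auto simp: annihilator_image_mult)

lemma jet_rank_toric_cone:
  fixes r :: "'m::finite \<Rightarrow> int^'n::finite"
  assumes "good_config r" and "q \<in> toric_cone r" and "\<forall>i. q $ i \<noteq> 0"
  shows "jet_rank (toric_cone r) k q = vec.dim (Ak_rows r k)"
proof -
  have "Vector_Spaces.linear (*s) (*s) ((*) q)"
    by unfold_locales (simp_all add: vec_eq_iff algebra_simps)
  moreover have "inj_on ((*) q) (vec.span (Ak_rows r k))"
    using assms(3) by (auto simp: inj_on_def vec_eq_iff)
  ultimately have "vec.dim ((*) q ` Ak_rows r k) = vec.dim (Ak_rows r k)"
    by (rule vec.dim_image_eq)
  then show ?thesis
    using dim_annihilator[of "(*) q ` Ak_rows r k"]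
    by (simp add: jet_rank_def jet_kernel_toric_cone[OF assms])
qed

lemma osculating_space_toric_cone_one:
  fixes r :: "'m::finite \<Rightarrow> int^'n::finite"
  assumes "good_config r"
  shows "osculating_space (toric_cone r) k (\<chi> i. 1) = vec.span (Ak_rows r k)"
proof -
  have "(\<chi> i. 1) = (1 :: complex^'m)"
    by (simp add: vec_eq_iff)
  moreover have "(1 :: complex^'m) \<in> toric_cone r"
    using exp_vec_in_torus_image[of r 0 0] torus_image_subset_toric_cone
    by (auto simp: exp_vec_def affine_values_def one_vec_def)
  ultimately show ?thesis
    using jet_kernel_toric_cone[OF assms, of 1 k] annihilator_annihilator[of "Ak_rows r k"]
    by (simp add: osculating_space_def)
qed

lemma generically_jet_spanned_toric_cone_iff:
  fixes r :: "'m::finite \<Rightarrow> int^'n::finite"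
  assumes "good_config r"
  shows "generically_jet_spanned (toric_cone r) n k \<longleftrightarrow> vec.dim (Ak_rows r k) = (n + k) choose n"
proof
  assume "generically_jet_spanned (toric_cone r) n k"
  then obtain f p where f: "poly_fun f" and p: "p \<in> toric_cone r" "f p \<noteq> 0"
    and rank: "\<And>p. p \<in> toric_cone r \<Longrightarrow> p \<noteq> 0 \<Longrightarrow> f p \<noteq> 0 \<Longrightarrow> jet_rank (toric_cone r) k p = (n + k) choose n"
    unfolding generically_jet_spanned_def by blast
  obtain s where s: "s \<in> torus_image r" "f s \<noteq> 0"
    using zariski_closure_poly_nonzero[OF p(1)[unfolded toric_cone_torus_image] f p(2)] by blast
  then have "s \<in> toric_cone r" and "\<forall>i. s $ i \<noteq> 0"
    using torus_image_subset_toric_cone torus_image_nonzero by blast+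
  moreover from this(2) have "s \<noteq> 0"
    by (metis zero_index)
  ultimately show "vec.dim (Ak_rows r k) = (n + k) choose n"
    using rank s(2) jet_rank_toric_cone[OF assms] by metis
next
  assume dim: "vec.dim (Ak_rows r k) = (n + k) choose n"
  show "generically_jet_spanned (toric_cone r) n k"
    unfolding generically_jet_spanned_def
  proof (intro exI conjI ballI impI)
    show "poly_fun (\<lambda>z::complex^'m. \<Prod>i\<in>UNIV. z $ i)"
      by (intro poly_fun_prod pf_coord) simp
    show "\<exists>p\<in>toric_cone r. (\<Prod>i\<in>UNIV. p $ i) \<noteq> 0"
      using exp_vec_in_torus_image[of r 0 0] torus_image_subset_toric_cone torus_image_nonzero
      by (metis prod_zero_iff finite subsetD)
    fix p assume "p \<in> toric_cone r" and "p \<noteq> 0 \<and> (\<Prod>i\<in>UNIV. p $ i) \<noteq> 0"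
    then show "jet_rank (toric_cone r) k p = (n + k) choose n"
      using jet_rank_toric_cone[OF assms] dim by simp
  qed
qed

theorem lemma5p1:
  fixes r :: "'m::finite \<Rightarrow> int^'n::finite" and k :: nat
  assumes "good_config r" and "k \<ge> 1"
  shows "vec.span (Ak_rows r k) = osculating_space (toric_cone r) k (\<chi> i. 1)
    \<and> (\<forall>r' :: 'm \<Rightarrow> int^'n2::finite. good_config r' \<and> toric_cone r' = toric_cone r \<longrightarrow>
          vec.span (Ak_rows r' k) = vec.span (Ak_rows r k))
    \<and> (generically_jet_spanned (toric_cone r) CARD('n) k \<longleftrightarrow>
          vec.dim (Ak_rows r k) = (CARD('n) + k) choose k)"
proof (intro conjI allI impI)
  show "vec.span (Ak_rows r k) = osculating_space (toric_cone r) k (\<chi> i. 1)"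
    using osculating_space_toric_cone_one[OF assms(1)] by simp
next
  fix r' :: "'m \<Rightarrow> int^'n2::finite"
  assume "good_config r' \<and> toric_cone r' = toric_cone r"
  then show "vec.span (Ak_rows r' k) = vec.span (Ak_rows r k)"
    using osculating_space_toric_cone_one[of r' k] osculating_space_toric_cone_one[OF assms(1)]
    by simp
next
  have "(CARD('n) + k) choose CARD('n) = (CARD('n) + k) choose k"
    using binomial_symmetric[of "CARD('n)" "CARD('n) + k"] by simp
  then show "generically_jet_spanned (toric_cone r) CARD('n) k \<longleftrightarrow>
      vec.dim (Ak_rows r k) = (CARD('n) + k) choose k"
    using generically_jet_spanned_toric_cone_iff[OF assms(1)] by simp
qed

end
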